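(* Let $d\ge 2$, let $\pi$ be a permutation of $\{0,1,\dots,d-1\}$ with $\pi(0)=0$, and let $a^{(0)},\dots,a^{(d-1)}$ be positive semidefinite complex $d\times d$ matrices with $\mathrm{Tr}\big(a^{(0)}+\dots+a^{(d-1)}\big)=1$. Let $$\rho_\pi=\sum_{\alpha=0}^{d-1}\sum_{i,j=0}^{d-1} a^{(\alpha)}_{ij}\, e_{ij}\otimes e_{\pi(i)+\alpha,\ \pi(j)+\alpha},$$ which is a state on $\mathbb{C}^d\otimes\mathbb{C}^d$, and define $d\times d$ matrices $\widetilde a^{(\gamma)}$, $\gamma=0,\dots,d-1$, by $\widetilde a^{(\gamma)}_{ij}=a^{(\gamma-\pi(i)-\pi(j))}_{ij}$ (superscript mod $d$). Then $\rho_\pi$ is PPT if and only if $\widetilde a^{(\gamma)}\ge 0$ for every $\gamma=0,\dots,d-1$.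
   Context: $\{e_0,\dots,e_{d-1}\}$ is the computational basis of $\mathbb{C}^d$, $e_{ij}=|e_i\rangle\langle e_j|$, and all indices of basis vectors are taken mod $d$. For an operator $\rho$ on $\mathbb{C}^d\otimes\mathbb{C}^d$, $\rho^\tau=(\mathrm{id}\otimes\tau)\rho$ denotes the partial transposition with respect to the second factor, where $\tau$ is transposition in the computational basis, i.e. $(\mathrm{id}\otimes\tau)(A\otimes B)=A\otimes B^{T}$. A state $\rho$ is called PPT if $\rho^\tau\ge 0$. *)

theory Defs
  imports "HOL-Analysis.Analysis" "HOL-Combinatorics.Permutations"
begin

text \<open>Matrices are functions from (row, column) indices to complex numbers;
  a d x d matrix uses indices in {..<d}, an operator on C^d (x) C^d uses
  pairs of indices in {..<d} x {..<d}: row (i,k), column (j,l).\<close>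

definition psd_on :: "'i set \<Rightarrow> ('i \<Rightarrow> 'i \<Rightarrow> complex) \<Rightarrow> bool" where
  "psd_on I A \<longleftrightarrow>
     (\<forall>p\<in>I. \<forall>q\<in>I. A q p = cnj (A p q)) \<and>
     (\<forall>x :: 'i \<Rightarrow> complex.
        (\<Sum>p\<in>I. \<Sum>q\<in>I. cnj (x p) * A p q * x q) \<in> \<real> \<and>
        0 \<le> Re (\<Sum>p\<in>I. \<Sum>q\<in>I. cnj (x p) * A p q * x q))"

definition eunit :: "nat \<Rightarrow> nat \<Rightarrow> nat \<Rightarrow> nat \<Rightarrow> nat \<Rightarrow> complex" where
  "eunit d i j = (\<lambda>r s. if r = i mod d \<and> s = j mod d then 1 else 0)"

definition tensor :: "(nat \<Rightarrow> nat \<Rightarrow> complex) \<Rightarrow> (nat \<Rightarrow> nat \<Rightarrow> complex)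
    \<Rightarrow> (nat \<times> nat) \<Rightarrow> (nat \<times> nat) \<Rightarrow> complex" where
  "tensor A B = (\<lambda>(r, k) (s, l). A r s * B k l)"

definition ptrans :: "((nat \<times> nat) \<Rightarrow> (nat \<times> nat) \<Rightarrow> complex)
    \<Rightarrow> (nat \<times> nat) \<Rightarrow> (nat \<times> nat) \<Rightarrow> complex" where
  "ptrans \<rho> = (\<lambda>(r, k) (s, l). \<rho> (r, l) (s, k))"

definition rho_pi :: "nat \<Rightarrow> (nat \<Rightarrow> nat) \<Rightarrow> (nat \<Rightarrow> nat \<Rightarrow> nat \<Rightarrow> complex)
    \<Rightarrow> (nat \<times> nat) \<Rightarrow> (nat \<times> nat) \<Rightarrow> complex" where
  "rho_pi d \<pi> a = (\<lambda>p q. \<Sum>\<alpha><d. \<Sum>i<d. \<Sum>j<d.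
      a \<alpha> i j * tensor (eunit d i j) (eunit d (\<pi> i + \<alpha>) (\<pi> j + \<alpha>)) p q)"

definition atilde :: "nat \<Rightarrow> (nat \<Rightarrow> nat) \<Rightarrow> (nat \<Rightarrow> nat \<Rightarrow> nat \<Rightarrow> complex)
    \<Rightarrow> nat \<Rightarrow> nat \<Rightarrow> nat \<Rightarrow> complex" where
  "atilde d \<pi> a \<gamma> = (\<lambda>i j.
      a (nat ((int \<gamma> - int (\<pi> i) - int (\<pi> j)) mod int d)) i j)"

end

theory Submission
  imports Defs
begin

(* Write T for the partial transpose of rho_pi.  Its entry at row (r,k)
   and column (s,l) is  sum_alpha a^(alpha)_rs [l = pi r + alpha] [k = pi s + alpha]
   (indices mod d).  For fixed (r,l) at most one alpha contributes, and the entry is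
   non-zero only if  k + pi r = l + pi s  (mod d); in that case it equals
   atilde^(gamma)_rs with gamma = k + pi r mod d.  Hence T is block diagonal with
   respect to the "shift class"  (r,k) |-> k + pi r mod d, and the block of class
   gamma, indexed by r via (r, gamma - pi r mod d), is exactly the matrix atilde^(gamma).
   A block-diagonal Hermitian form is positive semidefinite iff each block is. *)

definition quad_form :: "'i set \<Rightarrow> ('i \<Rightarrow> 'i \<Rightarrow> complex) \<Rightarrow> ('i \<Rightarrow> complex) \<Rightarrow> complex" where
  "quad_form I A x = (\<Sum>p\<in>I. \<Sum>q\<in>I. cnj (x p) * A p q * x q)"

definition hermitian_on :: "'i set \<Rightarrow> ('i \<Rightarrow> 'i \<Rightarrow> complex) \<Rightarrow> bool" where
  "hermitian_on I A \<longleftrightarrow> (\<forall>p\<in>I. \<forall>q\<in>I. A q p = cnj (A p q))"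

lemma psd_on_iff:
  "psd_on I A \<longleftrightarrow> hermitian_on I A \<and> (\<forall>x. quad_form I A x \<in> \<real> \<and> 0 \<le> Re (quad_form I A x))"
  unfolding psd_on_def hermitian_on_def quad_form_def by blast

lemma psd_on_hermitian:
  assumes "psd_on I A" "p \<in> I" "q \<in> I"
  shows "A q p = cnj (A p q)"
  using assms unfolding psd_on_def by blast

(* Extending a vector by zero shows that principal submatrices of a PSD matrix are PSD. *)
lemma quad_form_restrict:
  assumes "finite I" "J \<subseteq> I"
  shows "quad_form J A x = quad_form I A (\<lambda>p. if p \<in> J then x p else 0)"
proof -
  have "quad_form I A (\<lambda>p. if p \<in> J then x p else 0) =
      (\<Sum>p\<in>I. if p \<in> J then (\<Sum>q\<in>I. if q \<in> J then cnj (x p) * A p q * x q else 0) else 0)"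
    unfolding quad_form_def by (auto intro!: sum.cong)
  also have "\<dots> = quad_form J A x"
    using assms by (simp add: quad_form_def Int_absorb1 flip: sum.inter_restrict)
  finally show ?thesis by simp
qed

lemma psd_on_subset:
  assumes "psd_on I A" "finite I" "J \<subseteq> I"
  shows "psd_on J A"
  using assms unfolding psd_on_iff hermitian_on_def quad_form_restrict[OF assms(2,3)] by blast

lemma quad_form_reindex:
  assumes "bij_betw f J I"
  shows "quad_form J (\<lambda>i j. A (f i) (f j)) (\<lambda>i. x (f i)) = quad_form I A x"
proof -
  have reindex: "(\<Sum>i\<in>J. g (f i)) = sum g I" for g :: "_ \<Rightarrow> complex"
    by (rule sum.reindex_bij_betw[OF assms])
  have "(\<Sum>i\<in>J. \<Sum>j\<in>J. cnj (x (f i)) * A (f i) (f j) * x (f j)) =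
      (\<Sum>i\<in>J. \<Sum>q\<in>I. cnj (x (f i)) * A (f i) q * x q)"
    by (intro sum.cong refl reindex)
  also have "\<dots> = (\<Sum>p\<in>I. \<Sum>q\<in>I. cnj (x p) * A p q * x q)"
    by (rule reindex)
  finally show ?thesis
    unfolding quad_form_def .
qed

lemma psd_on_cong:
  assumes "\<And>p q. p \<in> I \<Longrightarrow> q \<in> I \<Longrightarrow> A p q = B p q"
  shows "psd_on I A \<longleftrightarrow> psd_on I B"
proof -
  have "quad_form I A = quad_form I B"
    unfolding quad_form_def using assms by (intro ext sum.cong) auto
  moreover have "hermitian_on I A \<longleftrightarrow> hermitian_on I B"
    unfolding hermitian_on_def using assms by auto
  ultimately show ?thesis
    unfolding psd_on_iff by simp
qed

lemma psd_on_pullback: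
  assumes f: "bij_betw f J I" and psd: "psd_on I A"
  shows "psd_on J (\<lambda>i j. A (f i) (f j))"
  unfolding psd_on_iff
proof safe
  show "hermitian_on J (\<lambda>i j. A (f i) (f j))"
    using psd bij_betwE[OF f] unfolding psd_on_iff hermitian_on_def by blast
  fix y :: "_ \<Rightarrow> complex"
  have "quad_form J (\<lambda>i j. A (f i) (f j)) y =
      quad_form J (\<lambda>i j. A (f i) (f j)) (\<lambda>i. (y \<circ> inv_into J f) (f i))"
    unfolding quad_form_def using bij_betw_inv_into_left[OF f] by (intro sum.cong) auto
  also have "\<dots> = quad_form I A (y \<circ> inv_into J f)"
    by (rule quad_form_reindex[OF f])
  finally show "quad_form J (\<lambda>i j. A (f i) (f j)) y \<in> \<real>"
    and "0 \<le> Re (quad_form J (\<lambda>i j. A (f i) (f j)) y)"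
    using psd unfolding psd_on_iff by auto
qed

lemma psd_on_reindex:
  assumes f: "bij_betw f J I"
  shows "psd_on J (\<lambda>i j. A (f i) (f j)) \<longleftrightarrow> psd_on I A"
proof
  assume "psd_on J (\<lambda>i j. A (f i) (f j))"
  then have "psd_on I (\<lambda>p q. A (f (inv_into J f p)) (f (inv_into J f q)))"
    by (rule psd_on_pullback[OF bij_betw_inv_into[OF f]])
  moreover have "psd_on I (\<lambda>p q. A (f (inv_into J f p)) (f (inv_into J f q))) \<longleftrightarrow> psd_on I A"
    by (rule psd_on_cong) (simp add: bij_betw_inv_into_right[OF f])
  ultimately show "psd_on I A" by simp
qed (rule psd_on_pullback[OF f])

lemma quad_form_block_sum:
  assumes I: "finite I" and G: "finite G" "b ` I \<subseteq> G"
    and off_block: "\<And>p q. p \<in> I \<Longrightarrow> q \<in> I \<Longrightarrow> b p \<noteq> b q \<Longrightarrow> A p q = 0"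
  shows "quad_form I A x = (\<Sum>g\<in>G. quad_form {p \<in> I. b p = g} A x)"
proof -
  let ?F = "\<lambda>p q. cnj (x p) * A p q * x q"
  have "quad_form I A x = (\<Sum>p\<in>I. \<Sum>q\<in>{q \<in> I. b q = b p}. ?F p q)"
    unfolding quad_form_def using I off_block by (auto simp: sum.inter_filter intro!: sum.cong)
  also have "\<dots> = (\<Sum>g\<in>G. \<Sum>p\<in>{p \<in> I. b p = g}. \<Sum>q\<in>{q \<in> I. b q = b p}. ?F p q)"
    by (rule sum.group[OF I G, symmetric])
  also have "\<dots> = (\<Sum>g\<in>G. quad_form {p \<in> I. b p = g} A x)"
    unfolding quad_form_def by (intro sum.cong refl) auto
  finally show ?thesis .
qed

lemma psd_on_block_diagonal:
  assumes I: "finite I" and G: "finite G" "b ` I \<subseteq> G"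
    and off_block: "\<And>p q. p \<in> I \<Longrightarrow> q \<in> I \<Longrightarrow> b p \<noteq> b q \<Longrightarrow> A p q = 0"
  shows "psd_on I A \<longleftrightarrow> (\<forall>g\<in>G. psd_on {p \<in> I. b p = g} A)"
proof
  assume "psd_on I A"
  then show "\<forall>g\<in>G. psd_on {p \<in> I. b p = g} A"
    by (auto intro: psd_on_subset[OF _ I])
next
  assume blocks: "\<forall>g\<in>G. psd_on {p \<in> I. b p = g} A"
  have "hermitian_on I A"
    unfolding hermitian_on_def
  proof (intro ballI)
    fix p q assume pq: "p \<in> I" "q \<in> I"
    show "A q p = cnj (A p q)"
    proof (cases "b p = b q")
      case True
      have "psd_on {p' \<in> I. b p' = b p} A"
        using blocks G(2) pq(1) by blast
      then show ?thesis
        by (rule psd_on_hermitian) (use True pq in auto)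
    next
      case False
      then show ?thesis
        using off_block[OF pq] off_block[OF pq(2,1)] by simp
    qed
  qed
  moreover have "quad_form I A x \<in> \<real> \<and> 0 \<le> Re (quad_form I A x)" for x
  proof -
    have "quad_form {p \<in> I. b p = g} A x \<in> \<real> \<and> 0 \<le> Re (quad_form {p \<in> I. b p = g} A x)"
      if "g \<in> G" for g
      using blocks that unfolding psd_on_iff by simp
    moreover have "quad_form I A x = (\<Sum>g\<in>G. quad_form {p \<in> I. b p = g} A x)"
      by (rule quad_form_block_sum[OF I G off_block])
    ultimately show ?thesis
      by (simp add: Re_sum sum_in_Reals sum_nonneg)
  qed
  ultimately show "psd_on I A"
    unfolding psd_on_iff by blast
qed

lemma eq_mod_iff_dvd:
  fixes d x y :: nat
  assumes "x < d"
  shows "x = y mod d \<longleftrightarrow> int d dvd int x - int y"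
proof -
  have "x = y mod d \<longleftrightarrow> x mod d = y mod d" using assms by simp
  also have "\<dots> \<longleftrightarrow> int x mod int d = int y mod int d" by (simp flip: of_nat_mod)
  also have "\<dots> \<longleftrightarrow> int d dvd int x - int y" by (rule mod_eq_dvd_iff)
  finally show ?thesis .
qed

lemma eq_nat_mod_iff_dvd:
  fixes d x :: nat and y :: int
  assumes "x < d"
  shows "x = nat (y mod int d) \<longleftrightarrow> int d dvd int x - y"
proof -
  have "x = nat (y mod int d) \<longleftrightarrow> int x = y mod int d" using assms by auto
  also have "\<dots> \<longleftrightarrow> int x mod int d = y mod int d" using assms by simp
  also have "\<dots> \<longleftrightarrow> int d dvd int x - y" by (rule mod_eq_dvd_iff)
  finally show ?thesis .
qed

(* All conditions become divisibility by d
   of integer differences A, B, C, E, G, and these satisfy C = B - A and B = - E - G. *)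
lemma shift_condition:
  fixes d k l p q \<alpha> :: nat
  assumes "k < d" "l < d" "\<alpha> < d"
  shows "(l = (p + \<alpha>) mod d \<and> k = (q + \<alpha>) mod d) \<longleftrightarrow>
         ((k + p) mod d = (l + q) mod d \<and>
          \<alpha> = nat ((int ((k + p) mod d) - int p - int q) mod int d))"
proof -
  define g where "g = int ((k + p) mod d)"
  define A B C E G where "A = int l - (int p + int \<alpha>)" and "B = int k - (int q + int \<alpha>)"
    and "C = (int k + int p) - (int l + int q)" and "E = int \<alpha> - (g - int p - int q)"
    and "G = g - (int k + int p)"
  have "int d dvd G"
    unfolding G_def g_def by (metis mod_mod_trivial mod_eq_dvd_iff of_nat_add of_nat_mod)
  moreover have "(k + p) mod d = (l + q) mod d \<longleftrightarrow> int d dvd C"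
    unfolding C_def by (metis mod_eq_dvd_iff of_nat_add of_nat_eq_iff of_nat_mod)
  moreover have "l = (p + \<alpha>) mod d \<longleftrightarrow> int d dvd A"
    using eq_mod_iff_dvd[OF assms(2)] unfolding A_def by simp
  moreover have "k = (q + \<alpha>) mod d \<longleftrightarrow> int d dvd B"
    using eq_mod_iff_dvd[OF assms(1)] unfolding B_def by simp
  moreover have "\<alpha> = nat ((g - int p - int q) mod int d) \<longleftrightarrow> int d dvd E"
    unfolding E_def by (rule eq_nat_mod_iff_dvd[OF assms(3)])
  moreover have "C = B - A" and "B = - E - G"
    unfolding A_def B_def C_def E_def G_def by simp_all
  ultimately show ?thesis
    unfolding g_def by (metis dvd_diff dvd_add_right_iff diff_add_cancel dvd_minus_iff)
qed

lemma sum_eunit_entry: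
  assumes "r < d" "s < d"
  shows "(\<Sum>i<d. \<Sum>j<d. f i j * eunit d i j r s) = f r s"
proof -
  have "(\<Sum>i<d. \<Sum>j<d. f i j * eunit d i j r s) = (\<Sum>p\<in>{..<d} \<times> {..<d}. if p = (r, s) then case_prod f p else 0)"
    unfolding eunit_def sum.cartesian_product by (intro sum.cong) (auto split: if_splits)
  also have "\<dots> = f r s"
    using assms by simp
  finally show ?thesis .
qed

lemma ptrans_rho_pi_entry:
  assumes "r < d" "s < d" "k < d" "l < d"
  shows "ptrans (rho_pi d \<pi> a) (r, k) (s, l) =
    (if (k + \<pi> r) mod d = (l + \<pi> s) mod d then atilde d \<pi> a ((k + \<pi> r) mod d) r s else 0)"
proof -
  define C where "C \<longleftrightarrow> (k + \<pi> r) mod d = (l + \<pi> s) mod d"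
  define \<alpha>\<^sub>0 where "\<alpha>\<^sub>0 = nat ((int ((k + \<pi> r) mod d) - int (\<pi> r) - int (\<pi> s)) mod int d)"
  have "\<alpha>\<^sub>0 < d"
    unfolding \<alpha>\<^sub>0_def using assms(1) by (simp add: nat_less_iff)
  have "ptrans (rho_pi d \<pi> a) (r, k) (s, l) =
      (\<Sum>\<alpha><d. \<Sum>i<d. \<Sum>j<d. (a \<alpha> i j * eunit d (\<pi> i + \<alpha>) (\<pi> j + \<alpha>) l k) * eunit d i j r s)"
    unfolding ptrans_def rho_pi_def tensor_def by (simp add: mult_ac)
  also have "\<dots> = (\<Sum>\<alpha><d. a \<alpha> r s * eunit d (\<pi> r + \<alpha>) (\<pi> s + \<alpha>) l k)"
    using assms(1,2) by (simp add: sum_eunit_entry)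
  also have "\<dots> = (\<Sum>\<alpha><d. if l = (\<pi> r + \<alpha>) mod d \<and> k = (\<pi> s + \<alpha>) mod d then a \<alpha> r s else 0)"
    unfolding eunit_def by (intro sum.cong) auto
  also have "\<dots> = (\<Sum>\<alpha><d. if \<alpha> = \<alpha>\<^sub>0 then (if C then a \<alpha>\<^sub>0 r s else 0) else 0)"
    using shift_condition[OF assms(3,4)] unfolding C_def \<alpha>\<^sub>0_def by (intro sum.cong) auto
  also have "\<dots> = (if C then atilde d \<pi> a ((k + \<pi> r) mod d) r s else 0)"
    using \<open>\<alpha>\<^sub>0 < d\<close> unfolding \<alpha>\<^sub>0_def atilde_def by simp
  finally show ?thesis unfolding C_def .
qed

definition shift_class :: "nat \<Rightarrow> (nat \<Rightarrow> nat) \<Rightarrow> nat \<times> nat \<Rightarrow> nat" where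
  "shift_class d \<pi> p = (snd p + \<pi> (fst p)) mod d"

definition class_rep :: "nat \<Rightarrow> (nat \<Rightarrow> nat) \<Rightarrow> nat \<Rightarrow> nat \<Rightarrow> nat \<times> nat" where
  "class_rep d \<pi> \<gamma> r = (r, nat ((int \<gamma> - int (\<pi> r)) mod int d))"

lemma shift_class_iff:
  assumes "k < d" "\<gamma> < d"
  shows "shift_class d \<pi> (r, k) = \<gamma> \<longleftrightarrow> k = nat ((int \<gamma> - int (\<pi> r)) mod int d)"
proof -
  have "shift_class d \<pi> (r, k) = \<gamma> \<longleftrightarrow> \<gamma> = (k + \<pi> r) mod d"
    unfolding shift_class_def by auto
  also have "\<dots> \<longleftrightarrow> int d dvd int \<gamma> - (int k + int (\<pi> r))"
    using eq_mod_iff_dvd[OF assms(2)] by simp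
  also have "\<dots> \<longleftrightarrow> int d dvd int k - (int \<gamma> - int (\<pi> r))"
    by (metis dvd_minus_iff minus_diff_eq diff_diff_eq2 add.commute)
  also have "\<dots> \<longleftrightarrow> k = nat ((int \<gamma> - int (\<pi> r)) mod int d)"
    using eq_nat_mod_iff_dvd[OF assms(1)] by simp
  finally show ?thesis .
qed

(* Each class gamma meets every row in exactly one index, so r |-> class_rep gamma r
   enumerates the block of class gamma; its inverse is the row projection. *)
lemma class_rep_bij:
  assumes "\<gamma> < d"
  shows "bij_betw (class_rep d \<pi> \<gamma>) {..<d} {p \<in> {..<d} \<times> {..<d}. shift_class d \<pi> p = \<gamma>}"
proof (rule bij_betwI[where g = fst])
  have rep_lt: "nat ((int \<gamma> - int (\<pi> r)) mod int d) < d" for r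
    using assms by (simp add: nat_less_iff)
  show "class_rep d \<pi> \<gamma> \<in> {..<d} \<rightarrow> {p \<in> {..<d} \<times> {..<d}. shift_class d \<pi> p = \<gamma>}"
    using shift_class_iff[OF rep_lt assms] rep_lt by (auto simp: class_rep_def)
  show "class_rep d \<pi> \<gamma> (fst p) = p" if block: "p \<in> {p \<in> {..<d} \<times> {..<d}. shift_class d \<pi> p = \<gamma>}" for p
  proof -
    obtain r k where p: "p = (r, k)" "k < d" "shift_class d \<pi> (r, k) = \<gamma>"
      using block by auto
    then show ?thesis
      using shift_class_iff[OF p(2) assms] by (simp add: class_rep_def)
  qed
qed (auto simp: class_rep_def)

lemma ptrans_rho_pi_class_block:
  assumes "r < d" "s < d" "\<gamma> < d"
  shows "ptrans (rho_pi d \<pi> a) (class_rep d \<pi> \<gamma> r) (class_rep d \<pi> \<gamma> s) = atilde d \<pi> a \<gamma> r s"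
proof -
  let ?block = "{p \<in> {..<d} \<times> {..<d}. shift_class d \<pi> p = \<gamma>}"
  have "class_rep d \<pi> \<gamma> r \<in> ?block" "class_rep d \<pi> \<gamma> s \<in> ?block"
    using bij_betwE[OF class_rep_bij[OF assms(3)]] assms(1,2) by simp_all
  moreover obtain k l where "class_rep d \<pi> \<gamma> r = (r, k)" "class_rep d \<pi> \<gamma> s = (s, l)"
    by (simp add: class_rep_def)
  ultimately show ?thesis
    by (simp add: ptrans_rho_pi_entry shift_class_def)
qed

lemma psd_on_class_block_iff:
  assumes "\<gamma> < d"
  shows "psd_on {p \<in> {..<d} \<times> {..<d}. shift_class d \<pi> p = \<gamma>} (ptrans (rho_pi d \<pi> a)) \<longleftrightarrow>
         psd_on {..<d} (atilde d \<pi> a \<gamma>)"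
proof -
  let ?T = "ptrans (rho_pi d \<pi> a)"
  have "psd_on {..<d} (atilde d \<pi> a \<gamma>) \<longleftrightarrow>
      psd_on {..<d} (\<lambda>r s. ?T (class_rep d \<pi> \<gamma> r) (class_rep d \<pi> \<gamma> s))"
    by (rule psd_on_cong) (simp add: ptrans_rho_pi_class_block assms)
  also have "\<dots> \<longleftrightarrow> psd_on {p \<in> {..<d} \<times> {..<d}. shift_class d \<pi> p = \<gamma>} ?T"
    by (rule psd_on_reindex[OF class_rep_bij[OF assms]])
  finally show ?thesis ..
qed

theorem theorem3:
  fixes d :: nat and \<pi> :: "nat \<Rightarrow> nat" and a :: "nat \<Rightarrow> nat \<Rightarrow> nat \<Rightarrow> complex"
  assumes "d \<ge> 2"
    and "\<pi> permutes {..<d}" and "\<pi> 0 = 0"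
    and "\<And>\<alpha>. \<alpha> < d \<Longrightarrow> psd_on {..<d} (a \<alpha>)"
    and "(\<Sum>\<alpha><d. \<Sum>i<d. a \<alpha> i i) = 1"
  shows "psd_on ({..<d} \<times> {..<d}) (ptrans (rho_pi d \<pi> a)) \<longleftrightarrow>
         (\<forall>\<gamma><d. psd_on {..<d} (atilde d \<pi> a \<gamma>))"
proof -
  have "0 < d" using assms(1) by simp
  have "psd_on ({..<d} \<times> {..<d}) (ptrans (rho_pi d \<pi> a)) \<longleftrightarrow>
      (\<forall>\<gamma>\<in>{..<d}. psd_on {p \<in> {..<d} \<times> {..<d}. shift_class d \<pi> p = \<gamma>} (ptrans (rho_pi d \<pi> a)))"
    by (rule psd_on_block_diagonal)
      (auto simp: shift_class_def \<open>0 < d\<close> ptrans_rho_pi_entry)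
  also have "\<dots> \<longleftrightarrow> (\<forall>\<gamma><d. psd_on {..<d} (atilde d \<pi> a \<gamma>))"
    using psd_on_class_block_iff by auto
  finally show ?thesis .
qed

end
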